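(* Let $0<\delta\leqslant 2^{-20}$, let $\xi$ be a real number with $\inf_{n\in\mathbb{N}}n\|n\xi\|\geqslant\delta$, and let $\alpha_1,\alpha_2,\beta_1,\beta_2\in[0,1]$ with $\alpha_1+\beta_1=\alpha_2+\beta_2=1$ and $\alpha_1=\max\{\alpha_1,\alpha_2\}$. Let $q$ be a positive integer, $q_1=\left[\frac{q^2}{\delta}\log\frac{q^2}{\delta}\right]+1$ and $q_2=\left[\frac{q_1^2}{\delta}\log\frac{q_1^2}{\delta}\right]+1$. If $$\mu(B_{q_1})\geqslant\frac{\mu(B_q)}{2}>0,$$ then $$\mu(B_{q_2})\geqslant\frac{\mu(B_{q_1})}{2}.$$
   Context: $\|t\|$ is the distance to the nearest integer, $\log$ the natural logarithm, $[\cdot]$ the integer part, $\mu$ Lebesgue measure. For $\alpha\in[0,1]$, integers $x\geqslant1$ and $0\leqslant y\leqslant x$ let $E_\alpha(x,y)=\big(\frac{y}{x}-\frac{\delta}{x^{1+\alpha}(\log(x+1))^\alpha},\ \frac{y}{x}+\frac{\delta}{x^{1+\alpha}(\log(x+1))^\alpha}\big)$ and $E_\alpha(x)=\bigcup_{y=0}^x E_\alpha(x,y)\cap[0,1]$. Let $l(x,\alpha)=\left[\log\big(x^{1+\alpha}(\log(x+1))^\alpha/(2\delta)\big)/\log 2\right]$. Let $A^c_\alpha(x)$ be the union of all closed dyadic intervals $[a/2^{l(x,\alpha)},(a+1)/2^{l(x,\alpha)}]\subseteq[0,1]$, $a\in\mathbb{Z}$, whose interior is disjoint from $E_\alpha(x)$,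 and $A_\alpha(x)=[0,1]\setminus A^c_\alpha(x)$ (so $A_\alpha(x)$ is the smallest union of dyadic intervals of length $2^{-l(x,\alpha)}$ covering $E_\alpha(x)$). For $\beta\in[0,1]$ and $q\geqslant1$ let $K^{(\beta)}_\xi(0,q)=\{x\in\mathbb{N}:\ 0<x\leqslant q,\ \|x\xi\|\leqslant\delta/(x\log(x+1))^\beta\}$, and $$B_q=\Big(\bigcap_{x\in K^{(\beta_1)}_\xi(0,q)}A^c_{\alpha_1}(x)\Big)\cap\Big(\bigcap_{x\in K^{(\beta_2)}_\xi(0,q)}A^c_{\alpha_2}(x)\Big)$$ (intersections over an empty index set being $[0,1]$). *)

theory Defs
  imports "HOL-Analysis.Analysis"
begin

definition dnint :: "real \<Rightarrow> real" where
  "dnint t = \<bar>t - of_int (round t)\<bar>"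

definition Erad :: "real \<Rightarrow> real \<Rightarrow> nat \<Rightarrow> real" where
  "Erad \<delta> \<alpha> x = \<delta> / (real x powr (1 + \<alpha>) * ln (real x + 1) powr \<alpha>)"

definition Eint :: "real \<Rightarrow> real \<Rightarrow> nat \<Rightarrow> nat \<Rightarrow> real set" where
  "Eint \<delta> \<alpha> x y = {real y / real x - Erad \<delta> \<alpha> x <..< real y / real x + Erad \<delta> \<alpha> x}"

definition Eset :: "real \<Rightarrow> real \<Rightarrow> nat \<Rightarrow> real set" where
  "Eset \<delta> \<alpha> x = (\<Union>y\<in>{0..x}. Eint \<delta> \<alpha> x y) \<inter> {0..1}"

definition lexp :: "real \<Rightarrow> real \<Rightarrow> nat \<Rightarrow> int" where
  "lexp \<delta> \<alpha> x = \<lfloor>ln (real x powr (1 + \<alpha>) * ln (real x + 1) powr \<alpha> / (2 * \<delta>)) / ln 2\<rfloor>"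

definition dyad :: "int \<Rightarrow> int \<Rightarrow> real set" where
  "dyad l a = {real_of_int a / 2 powr real_of_int l .. (real_of_int a + 1) / 2 powr real_of_int l}"

definition dyad_int :: "int \<Rightarrow> int \<Rightarrow> real set" where
  "dyad_int l a = {real_of_int a / 2 powr real_of_int l <..< (real_of_int a + 1) / 2 powr real_of_int l}"

definition Acomp :: "real \<Rightarrow> real \<Rightarrow> nat \<Rightarrow> real set" where
  "Acomp \<delta> \<alpha> x = \<Union>{dyad (lexp \<delta> \<alpha> x) a | a.
        dyad (lexp \<delta> \<alpha> x) a \<subseteq> {0..1} \<and> dyad_int (lexp \<delta> \<alpha> x) a \<inter> Eset \<delta> \<alpha> x = {}}"

definition Kset :: "real \<Rightarrow> real \<Rightarrow> real \<Rightarrow> nat \<Rightarrow> nat set" where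
  "Kset \<delta> \<xi> \<beta> q = {x. 0 < x \<and> x \<le> q \<and>
      dnint (real x * \<xi>) \<le> \<delta> / (real x * ln (real x + 1)) powr \<beta>}"

text \<open>B_q (empty intersections are [0,1], hence the intersection with [0,1]).\<close>
definition Bset :: "real \<Rightarrow> real \<Rightarrow> real \<Rightarrow> real \<Rightarrow> real \<Rightarrow> real \<Rightarrow> nat \<Rightarrow> real set" where
  "Bset \<delta> \<xi> \<alpha>1 \<beta>1 \<alpha>2 \<beta>2 q =
     {0..1} \<inter> (\<Inter>x\<in>Kset \<delta> \<xi> \<beta>1 q. Acomp \<delta> \<alpha>1 x) \<inter> (\<Inter>x\<in>Kset \<delta> \<xi> \<beta>2 q. Acomp \<delta> \<alpha>2 x)"

definition qnext :: "real \<Rightarrow> nat \<Rightarrow> nat" where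
  "qnext \<delta> q = nat \<lfloor>(real q ^ 2 / \<delta>) * ln (real q ^ 2 / \<delta>)\<rfloor> + 1"

end

theory Submission
  imports Defs
begin

text \<open>
  A point of B(q1) - B(q2) lies in B(q) but outside A^c_\<alpha>i(x) for some x in
  K^(\<beta>i)(0,q2) - K^(\<beta>i)(0,q1). The sets A^c_\<alpha>(x'), x' \<le> q, are unions of dyadic intervals of
  length at least 2^-m with 2^m < q1 < x, so B(q) is a union of dyadic cells of length
  2^-m \<ge> 1/x; double counting then shows that cutting out the neighbourhoods of the points y/x
  removes at most 25 \<delta> / (x log(x+1))^\<alpha> \<mu>(B(q)). Since n ||n\<xi>|| \<ge> \<delta>, distinct elements of
  K^(\<beta>) are (x log(x+1))^\<beta> / 2 apart, so for \<alpha> + \<beta> = 1 these losses add up to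
  O(\<delta> \<Sum>_{q1 < n \<le> 2 q2} 1/(n log n)) = O(\<delta> log(log q2 / log q1)) = O(\<delta>).
  Hence \<mu>(B(q1) - B(q2)) \<le> 4800 \<delta> \<mu>(B(q)) \<le> \<mu>(B(q1)) / 2.
\<close>

section \<open>Badly approximable numbers and the sets K\<close>

lemma dnint_nonneg: "0 \<le> dnint t"
  unfolding dnint_def by simp

lemma dnint_le_dist_int: "dnint t \<le> \<bar>t - of_int k\<bar>"
proof (cases "\<bar>t - of_int k\<bar> \<ge> 1/2")
  case True
  have "\<bar>t - of_int (round t)\<bar> \<le> 1/2"
    using of_int_round_abs_le[of t] by (simp add: abs_minus_commute)
  then show ?thesis using True unfolding dnint_def by simp
next
  case False
  have "\<bar>of_int (round t) - t\<bar> \<le> 1/2" by (rule of_int_round_abs_le)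
  then have "\<bar>of_int k - of_int (round t)\<bar> < (1::real)" using False by linarith
  then have "k = round t" by linarith
  then show ?thesis unfolding dnint_def by simp
qed

lemma dnint_diff_le: "dnint (a - b) \<le> dnint a + dnint b"
proof -
  have "dnint (a - b) \<le> \<bar>(a - b) - of_int (round a - round b)\<bar>" by (rule dnint_le_dist_int)
  also have "\<dots> \<le> \<bar>a - of_int (round a)\<bar> + \<bar>b - of_int (round b)\<bar>" by simp
  finally show ?thesis unfolding dnint_def .
qed

definition badly_approximable :: "real \<Rightarrow> real \<Rightarrow> bool" where
  "badly_approximable \<delta> \<xi> \<longleftrightarrow> (\<forall>n::nat. 1 \<le> n \<longrightarrow> \<delta> \<le> real n * dnint (real n * \<xi>))"

lemma badly_approximableI_INF:
  assumes "(INF n\<in>{n::nat. 1 \<le> n}. real n * dnint (real n * \<xi>)) \<ge> \<delta>"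
  shows "badly_approximable \<delta> \<xi>"
  unfolding badly_approximable_def
proof (intro allI impI)
  fix n :: nat assume "1 \<le> n"
  have "bdd_below ((\<lambda>n. real n * dnint (real n * \<xi>)) ` {n::nat. 1 \<le> n})"
    by (rule bdd_belowI[of _ 0]) (auto simp: dnint_nonneg)
  then have "(INF n\<in>{n::nat. 1 \<le> n}. real n * dnint (real n * \<xi>)) \<le> real n * dnint (real n * \<xi>)"
    using \<open>1 \<le> n\<close> by (intro cINF_lower) auto
  then show "\<delta> \<le> real n * dnint (real n * \<xi>)" using assms by linarith
qed

definition xlog :: "nat \<Rightarrow> real" where
  "xlog x = real x * ln (real x + 1)"

lemma xlog_pos: "1 \<le> x \<Longrightarrow> 0 < xlog x"
  unfolding xlog_def by simp

lemma xlog_mono: "1 \<le> x \<Longrightarrow> x \<le> y \<Longrightarrow> xlog x \<le> xlog y"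
  unfolding xlog_def by (intro mult_mono) auto

lemma xlog_le_4_xlog:
  assumes "1 \<le> x" "x \<le> n" "real n \<le> 2 * real x"
  shows "xlog n \<le> 4 * xlog x"
proof -
  have "(real x + 1)^2 = real x * real x + 2 * real x + 1" by algebra
  then have "real n + 1 \<le> (real x + 1)^2"
    using assms zero_le_square[of "real x"] by linarith
  then have "ln (real n + 1) \<le> ln ((real x + 1)^2)" by simp
  also have "\<dots> = 2 * ln (real x + 1)" by (simp add: ln_realpow)
  finally have "xlog n \<le> (2 * real x) * (2 * ln (real x + 1))"
    unfolding xlog_def using assms by (intro mult_mono) auto
  then show ?thesis unfolding xlog_def by simp
qed

lemma mem_Kset_iff:
  "x \<in> Kset \<delta> \<xi> \<beta> Q \<longleftrightarrow> 1 \<le> x \<and> x \<le> Q \<and> dnint (real x * \<xi>) \<le> \<delta> / xlog x powr \<beta>"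
  unfolding Kset_def xlog_def by auto

lemma Kset_mono: "Q \<le> Q' \<Longrightarrow> Kset \<delta> \<xi> \<beta> Q \<subseteq> Kset \<delta> \<xi> \<beta> Q'"
  unfolding Kset_def by auto

lemma finite_Kset: "finite (Kset \<delta> \<xi> \<beta> Q)"
  by (rule finite_subset[of _ "{..Q}"]) (auto simp: Kset_def)

lemma xlog_powr_le_of_mem_Kset:
  assumes "badly_approximable \<delta> \<xi>" "0 < \<delta>" "x \<in> Kset \<delta> \<xi> \<beta> Q"
  shows "xlog x powr \<beta> \<le> real x"
proof -
  have x: "1 \<le> x" "dnint (real x * \<xi>) \<le> \<delta> / xlog x powr \<beta>"
    using assms(3) by (auto simp: mem_Kset_iff)
  have "\<delta> \<le> real x * (\<delta> / xlog x powr \<beta>)"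
    using assms(1) x unfolding badly_approximable_def
    by (meson mult_left_mono of_nat_0_le_iff order_trans)
  then show ?thesis using assms(2) xlog_pos[OF x(1)] by (simp add: field_simps)
qed

text \<open>Two solutions of the same inequality are far apart because their difference is itself
  a good approximation denominator.\<close>
lemma Kset_gap:
  assumes bad: "badly_approximable \<delta> \<xi>" and "0 < \<delta>" "0 \<le> \<beta>"
    and x: "x \<in> Kset \<delta> \<xi> \<beta> Q" and x': "x' \<in> Kset \<delta> \<xi> \<beta> Q'" and "x < x'"
  shows "xlog x powr \<beta> / 2 \<le> real x' - real x"
proof -
  have x1: "1 \<le> x" and k: "dnint (real x * \<xi>) \<le> \<delta> / xlog x powr \<beta>"
    and k': "dnint (real x' * \<xi>) \<le> \<delta> / xlog x' powr \<beta>"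
    using x x' by (auto simp: mem_Kset_iff)
  have p: "xlog x powr \<beta> > 0" using xlog_pos[OF x1] by simp
  have "xlog x powr \<beta> \<le> xlog x' powr \<beta>"
    using xlog_mono[OF x1] \<open>x < x'\<close> \<open>0 \<le> \<beta>\<close> xlog_pos[OF x1] by (intro powr_mono2) auto
  then have k'': "\<delta> / xlog x' powr \<beta> \<le> \<delta> / xlog x powr \<beta>"
    using p \<open>0 < \<delta>\<close> by (intro divide_left_mono mult_pos_pos) auto
  have "dnint (real (x' - x) * \<xi>) = dnint (real x' * \<xi> - real x * \<xi>)"
    using \<open>x < x'\<close> by (simp add: of_nat_diff left_diff_distrib)
  also have "\<dots> \<le> 2 * (\<delta> / xlog x powr \<beta>)"
    using dnint_diff_le[of "real x' * \<xi>" "real x * \<xi>"] k k' k'' by linarith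
  finally have gap: "dnint (real (x' - x) * \<xi>) \<le> 2 * (\<delta> / xlog x powr \<beta>)" .
  have "1 \<le> x' - x" using \<open>x < x'\<close> by simp
  then have "\<delta> \<le> real (x' - x) * dnint (real (x' - x) * \<xi>)"
    using bad unfolding badly_approximable_def by blast
  then have "\<delta> \<le> real (x' - x) * (2 * (\<delta> / xlog x powr \<beta>))"
    using gap by (meson mult_left_mono of_nat_0_le_iff order_trans)
  then have "xlog x powr \<beta> \<le> real (x' - x) * 2" using p \<open>0 < \<delta>\<close> by (simp add: field_simps)
  then show ?thesis using \<open>x < x'\<close> by (simp add: of_nat_diff)
qed

text \<open>Each \<open>x\<close> owns the integers in \<open>[x, x + xlog x powr \<beta> / 2)\<close>; these blocks are disjoint
  by \<open>Kset_gap\<close>, and on its block \<open>1 / xlog\<close> is at least a quarter of its value at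
  \<open>x\<close>, so with \<open>\<alpha> + \<beta> = 1\<close> each weight is dominated by the block sum of \<open>1 / xlog\<close>.\<close>
lemma sum_weight_Kset_le:
  assumes bad: "badly_approximable \<delta> \<xi>" and "0 < \<delta>" "0 \<le> \<alpha>" "0 \<le> \<beta>" "\<alpha> + \<beta> = 1"
    and Kx: "finite Kx" "Kx \<subseteq> Kset \<delta> \<xi> \<beta> Q" "\<And>x. x \<in> Kx \<Longrightarrow> a < x \<and> x \<le> b"
  shows "(\<Sum>x\<in>Kx. \<delta> / xlog x powr \<alpha>) \<le> 8 * \<delta> * (\<Sum>n=a+1..2*b. 1 / xlog n)"
proof -
  define w where "w x = xlog x powr \<beta> / 2" for x
  define I where "I x = {n. x \<le> n \<and> real n < real x + w x}" for x
  have x1: "1 \<le> x" if "x \<in> Kx" for x using that Kx(2) by (auto simp: mem_Kset_iff)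
  have w_le: "w x \<le> real x / 2" if "x \<in> Kx" for x
    using xlog_powr_le_of_mem_Kset[OF bad \<open>0 < \<delta>\<close>] that Kx(2) unfolding w_def by auto
  have I_eq: "I x = {x..<x + nat \<lceil>w x\<rceil>}" for x
  proof -
    have "real n < real x + w x \<longleftrightarrow> n < x + nat \<lceil>w x\<rceil>" if "x \<le> n" for n
    proof -
      have "real n < real x + w x \<longleftrightarrow> of_int (int (n - x)) < w x" using that by (auto simp: of_nat_diff)
      also have "\<dots> \<longleftrightarrow> int (n - x) < \<lceil>w x\<rceil>" by (simp add: less_ceiling_iff)
      also have "\<dots> \<longleftrightarrow> n < x + nat \<lceil>w x\<rceil>" using that by linarith
      finally show ?thesis .
    qed
    then show ?thesis unfolding I_def by auto
  qed
  have I_le: "real n \<le> 2 * real x" if "x \<in> Kx" "n \<in> I x" for x n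
    using that w_le[OF that(1)] unfolding I_def by auto
  have Isub: "I x \<subseteq> {a+1..2*b}" if "x \<in> Kx" for x
    using I_le[OF that] Kx(3)[OF that] unfolding I_def by fastforce
  have Idisj: "I x \<inter> I y = {}" if "x \<in> Kx" "y \<in> Kx" "x < y" for x y
  proof -
    have "x \<in> Kset \<delta> \<xi> \<beta> Q" "y \<in> Kset \<delta> \<xi> \<beta> Q" using that Kx(2) by auto
    then have "w x \<le> real y - real x"
      using Kset_gap[OF bad \<open>0 < \<delta>\<close> \<open>0 \<le> \<beta>\<close>] \<open>x < y\<close> unfolding w_def by blast
    then show ?thesis unfolding I_def by auto
  qed
  have Idisj': "I x \<inter> I y = {}" if "x \<in> Kx" "y \<in> Kx" "x \<noteq> y" for x y
    using Idisj[of x y] Idisj[of y x] that by (cases "x < y") (auto simp: Int_commute)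
  have block: "\<delta> / xlog x powr \<alpha> \<le> 8 * \<delta> * (\<Sum>n\<in>I x. 1 / xlog n)" if x: "x \<in> Kx" for x
  proof -
    have L0: "xlog x > 0" using xlog_pos x1[OF x] by simp
    have "xlog x powr \<alpha> * xlog x powr \<beta> = xlog x"
      using L0 \<open>\<alpha> + \<beta> = 1\<close> by (simp add: powr_add[symmetric])
    then have "\<delta> / xlog x powr \<alpha> = 2 * \<delta> * w x / xlog x"
      using L0 unfolding w_def by (simp add: field_simps)
    also have "\<dots> \<le> 2 * \<delta> * real (card (I x)) / xlog x"
      using L0 \<open>0 < \<delta>\<close> real_nat_ceiling_ge[of "w x"] unfolding I_eq
      by (intro divide_right_mono mult_left_mono) auto
    also have "\<dots> = 2 * \<delta> * (\<Sum>n\<in>I x. 1 / xlog x)" by simp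
    also have "\<dots> \<le> 2 * \<delta> * (\<Sum>n\<in>I x. 4 / xlog n)"
    proof (intro mult_left_mono sum_mono)
      fix n assume n: "n \<in> I x"
      then have "xlog n \<le> 4 * xlog x" "xlog n > 0"
        using xlog_le_4_xlog[OF x1[OF x] _ I_le[OF x n]] xlog_pos x1[OF x]
        unfolding I_def by auto
      then show "1 / xlog x \<le> 4 / xlog n" using L0 by (simp add: field_simps)
    qed (use \<open>0 < \<delta>\<close> in auto)
    finally show ?thesis by (simp add: sum_distrib_left)
  qed
  have "(\<Sum>x\<in>Kx. \<delta> / xlog x powr \<alpha>) \<le> (\<Sum>x\<in>Kx. 8 * \<delta> * (\<Sum>n\<in>I x. 1 / xlog n))"
    by (intro sum_mono block)
  also have "\<dots> = 8 * \<delta> * (\<Sum>x\<in>Kx. \<Sum>n\<in>I x. 1 / xlog n)"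
    by (rule sum_distrib_left[symmetric])
  also have "(\<Sum>x\<in>Kx. \<Sum>n\<in>I x. 1 / xlog n) = (\<Sum>n\<in>(\<Union>x\<in>Kx. I x). 1 / xlog n)"
    by (rule sum.UNION_disjoint[symmetric]) (use Kx(1) Idisj' in \<open>auto simp: I_eq\<close>)
  also have "\<dots> \<le> (\<Sum>n=a+1..2*b. 1 / xlog n)"
    using Isub by (intro sum_mono2) (auto simp: xlog_def)
  finally show ?thesis using \<open>0 < \<delta>\<close> by simp
qed

lemma one_minus_inverse_le_ln: "0 < y \<Longrightarrow> 1 - 1 / y \<le> ln (y::real)"
  using ln_le_minus_one[of "1 / y"] by (simp add: ln_div)

lemma inverse_xlog_le_lnln_diff:
  assumes "2 \<le> n"
  shows "1 / xlog n \<le> 2 * (ln (ln (real (Suc n))) - ln (ln (real n)))"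
proof -
  define A where "A = ln (real n)"
  define B where "B = ln (real n + 1)"
  have n1: "real n > 1" using assms by simp
  have "0 < A" "A < B" unfolding A_def B_def using n1 by simp_all
  have "1 - 1 / (real (n+1) / real n) \<le> ln (real (n+1) / real n)"
    using n1 by (intro one_minus_inverse_le_ln) auto
  then have BA: "1 / (real n + 1) \<le> B - A"
    unfolding A_def B_def using n1 by (simp add: ln_div field_simps)
  have "1 - 1 / (B / A) \<le> ln (B / A)"
    using \<open>0 < A\<close> \<open>A < B\<close> by (intro one_minus_inverse_le_ln) auto
  then have "(B - A) / B \<le> ln B - ln A"
    using \<open>0 < A\<close> \<open>A < B\<close> by (simp add: ln_div field_simps)
  moreover have "1 / ((real n + 1) * B) \<le> (B - A) / B"
    using divide_right_mono[OF BA, of B] \<open>0 < A\<close> \<open>A < B\<close> by (simp add: divide_divide_eq_left)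
  moreover have "1 / xlog n \<le> 2 * (1 / ((real n + 1) * B))"
  proof -
    have "(real n + 1) * B \<le> 2 * (real n * B)" using n1 \<open>0 < A\<close> \<open>A < B\<close> by (simp add: algebra_simps)
    then have "2 / (2 * (real n * B)) \<le> 2 / ((real n + 1) * B)"
      using n1 \<open>0 < A\<close> \<open>A < B\<close> by (intro divide_left_mono) auto
    then show ?thesis unfolding xlog_def B_def by simp
  qed
  ultimately have "1 / xlog n \<le> 2 * (ln B - ln A)" by (smt (verit))
  then show ?thesis unfolding A_def B_def by (simp add: add.commute)
qed

lemma sum_inverse_xlog_le:
  assumes "2 \<le> a" "a \<le> Suc b"
  shows "(\<Sum>n=a..b. 1 / xlog n) \<le> 2 * (ln (ln (real (Suc b))) - ln (ln (real a)))"
proof -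
  have "(\<Sum>n=a..b. 1 / xlog n) \<le> (\<Sum>n=a..b. 2 * (ln (ln (real (Suc n))) - ln (ln (real n))))"
    using assms by (intro sum_mono inverse_xlog_le_lnln_diff) auto
  also have "\<dots> = 2 * (\<Sum>n=a..b. ln (ln (real (Suc n))) - ln (ln (real n)))"
    by (simp add: sum_distrib_left)
  also have "\<dots> = 2 * (ln (ln (real (Suc b))) - ln (ln (real a)))"
    using sum_Suc_diff[OF assms(2), of "\<lambda>n. ln (ln (real n))"] by simp
  finally show ?thesis .
qed

lemma sum_weight_Kset_diff_le:
  assumes "badly_approximable \<delta> \<xi>" "0 < \<delta>" "0 \<le> \<alpha>" "0 \<le> \<beta>" "\<alpha> + \<beta> = 1" "1 \<le> a" "a \<le> b"
  shows "(\<Sum>x\<in>Kset \<delta> \<xi> \<beta> b - Kset \<delta> \<xi> \<beta> a. \<delta> / xlog x powr \<alpha>)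
           \<le> 16 * \<delta> * (ln (ln (real (Suc (2 * b)))) - ln (ln (real (Suc a))))"
proof -
  have "(\<Sum>x\<in>Kset \<delta> \<xi> \<beta> b - Kset \<delta> \<xi> \<beta> a. \<delta> / xlog x powr \<alpha>)
          \<le> 8 * \<delta> * (\<Sum>n=a+1..2*b. 1 / xlog n)"
    using assms finite_Kset by (intro sum_weight_Kset_le[where Q = b]) (auto simp: mem_Kset_iff)
  also have "\<dots> \<le> 8 * \<delta> * (2 * (ln (ln (real (Suc (2 * b)))) - ln (ln (real (Suc a)))))"
    using assms sum_inverse_xlog_le[of "a + 1" "2 * b"] by (intro mult_left_mono) auto
  finally show ?thesis by (simp add: algebra_simps)
qed

section \<open>Growth of the sequence q, q1, q2\<close>

lemma qnext_bounds:
  assumes "0 < \<delta>" "\<delta> \<le> 1 / 2^20" "1 \<le> q"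
  defines "Z \<equiv> real q ^ 2 / \<delta>"
  shows "Z * ln Z < real (qnext \<delta> q)" "real (qnext \<delta> q) \<le> Z * ln Z + 1"
    "13 \<le> ln Z" "1 / \<delta> \<le> Z" "real q ^ 2 \<le> Z"
proof -
  have q: "1 \<le> real q ^ 2" using assms(3) by simp
  show Zd: "1 / \<delta> \<le> Z" unfolding Z_def using q assms(1) by (simp add: divide_right_mono)
  have "(2::real)^20 \<le> 1 / \<delta>" using assms(1,2) by (simp add: field_simps)
  then have "ln ((2::real)^20) \<le> ln Z" using Zd by (subst ln_le_cancel_iff) auto
  moreover have "ln ((2::real)^20) = real 20 * ln 2" by (rule ln_realpow)
  ultimately show lZ: "13 \<le> ln Z" using ln2_ge_two_thirds by linarith
  have "0 \<le> Z * ln Z" using lZ Zd assms(1) by (simp add: order.trans[OF _ Zd])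
  then show "Z * ln Z < real (qnext \<delta> q)" "real (qnext \<delta> q) \<le> Z * ln Z + 1"
    unfolding qnext_def Z_def[symmetric] by linarith+
  have "real q ^ 2 / 1 \<le> real q ^ 2 / \<delta>"
    using assms(1,2) q by (intro divide_left_mono) (auto simp: field_simps)
  then show "real q ^ 2 \<le> Z" unfolding Z_def by simp
qed

lemma qnext_gt:
  assumes "0 < \<delta>" "\<delta> \<le> 1 / 2^20" "1 \<le> q"
  shows "real q ^ 2 / \<delta> < real (qnext \<delta> q)"
proof -
  note A = qnext_bounds[OF assms]
  have "real q ^ 2 / \<delta> * 1 \<le> real q ^ 2 / \<delta> * ln (real q ^ 2 / \<delta>)"
    using A(3) assms(1) by (intro mult_left_mono) auto
  then show ?thesis using A(1) by linarith
qed

text \<open>As \<open>1 / \<delta> \<le> q\<close>, the next term is at most \<open>5 (q\<^sup>2 / \<delta>)\<^sup>2 \<le> q\<^sup>7\<close>.\<close>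
lemma ln_qnext_le:
  assumes d: "0 < \<delta>" "\<delta> \<le> 1 / 2^20" and q: "1 / \<delta> \<le> real q" "5 \<le> real q"
  shows "ln (real (Suc (2 * qnext \<delta> q))) \<le> 7 * ln (real (Suc q))"
proof -
  have q1: "1 \<le> q" using q(2) by simp
  note B = qnext_bounds[OF d q1]
  define Z where "Z = real q ^ 2 / \<delta>"
  have "1 \<le> 1 / \<delta>" using d by (simp add: field_simps)
  then have Z1: "1 \<le> Z" using B(4) Z_def by linarith
  have "ln Z \<le> Z" using ln_le_minus_one[of Z] Z1 by linarith
  then have "Z * ln Z \<le> Z * Z" using Z1 by (intro mult_left_mono) auto
  moreover have "real (qnext \<delta> q) \<le> Z * ln Z + 1" using B(2) unfolding Z_def .
  moreover have "1 \<le> Z * Z" using Z1 mult_mono[of 1 Z 1 Z] by simp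
  ultimately have "real (Suc (2 * qnext \<delta> q)) \<le> 5 * (Z * Z)" by linarith
  then have "ln (real (Suc (2 * qnext \<delta> q))) \<le> ln (5 * (Z * Z))" using Z1 by simp
  also have "\<dots> = ln 5 + 2 * (2 * ln (real q) + ln (1 / \<delta>))"
    unfolding Z_def using d q1 by (simp add: ln_mult ln_div ln_realpow)
  also have "\<dots> \<le> 7 * ln (real q)"
  proof -
    have "ln (1 / \<delta>) \<le> ln (real q)" using q(1) q1 d by (subst ln_le_cancel_iff) auto
    moreover have "ln 5 \<le> ln (real q)" using q(2) by simp
    ultimately show ?thesis by argo
  qed
  also have "\<dots> \<le> 7 * ln (real (Suc q))" using q1 by simp
  finally show ?thesis .
qed

lemma qnext_chain:
  assumes d: "0 < \<delta>" "\<delta> \<le> 1 / 2^20" and q: "1 \<le> q"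
    and q1: "q1 = qnext \<delta> q" and q2: "q2 = qnext \<delta> q1"
  shows "q \<le> q1" "q1 \<le> q2" "2 \<le> q1"
    "ln (ln (real (Suc (2 * q2)))) - ln (ln (real (Suc q1))) \<le> 6"
proof -
  have le_qnext: "p \<le> qnext \<delta> p" if "1 \<le> p" for p
  proof -
    have "real p \<le> real p ^ 2" using that by (simp add: power2_eq_square)
    then have "real p \<le> real (qnext \<delta> p)"
      using qnext_gt[OF d that] qnext_bounds(5)[OF d that] by linarith
    then show ?thesis by simp
  qed
  show "q \<le> q1" using le_qnext[OF q] q1 by simp
  have "1 / \<delta> < real q1"
    using qnext_gt[OF d q] qnext_bounds(4)[OF d q] q1 by linarith
  moreover have "(2::real)^20 \<le> 1 / \<delta>" using d by (simp add: field_simps)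
  ultimately have q1big: "1 / \<delta> \<le> real q1" "2^20 \<le> real q1" by linarith+
  then show "2 \<le> q1" by simp
  then show "q1 \<le> q2" using le_qnext[of q1] q2 by simp
  have r: "ln (real (Suc (2 * q2))) \<le> 7 * ln (real (Suc q1))"
    using ln_qnext_le[OF d q1big(1)] q1big(2) q2 by simp
  have lq: "0 < ln (real (Suc q1))" "0 < ln (real (Suc (2 * q2)))"
    using \<open>2 \<le> q1\<close> \<open>q1 \<le> q2\<close> by auto
  have "ln (ln (real (Suc (2 * q2)))) - ln (ln (real (Suc q1)))
          = ln (ln (real (Suc (2 * q2))) / ln (real (Suc q1)))"
    using lq by (simp add: ln_div)
  also have "\<dots> \<le> ln (real (Suc (2 * q2))) / ln (real (Suc q1)) - 1"
    using lq by (intro ln_le_minus_one) auto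
  also have "\<dots> \<le> 7 - 1" using r lq by (simp add: divide_le_eq)
  finally show "ln (ln (real (Suc (2 * q2)))) - ln (ln (real (Suc q1))) \<le> 6" by simp
qed

section \<open>Dyadic levels\<close>

lemma Erad_pos: "0 < \<delta> \<Longrightarrow> 1 \<le> x \<Longrightarrow> 0 < Erad \<delta> \<alpha> x"
  unfolding Erad_def by (auto intro!: divide_pos_pos mult_pos_pos)

lemma ln_Suc_powr_ge_half:
  assumes "0 \<le> \<alpha>" "\<alpha> \<le> 1" "1 \<le> x"
  shows "1/2 \<le> ln (real x + 1) powr \<alpha>"
proof -
  have "ln (2::real) \<le> ln (real x + 1)" using assms by simp
  then have l: "1/2 < ln (real x + 1)" using ln2_ge_two_thirds by linarith
  show ?thesis
  proof (cases "1 \<le> ln (real x + 1)")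
    case True
    then show ?thesis using assms ge_one_powr_ge_zero[of "ln (real x + 1)" \<alpha>] by linarith
  next
    case False
    then have "ln (real x + 1) powr 1 \<le> ln (real x + 1) powr \<alpha>"
      using assms l by (intro powr_mono') auto
    then show ?thesis using l by simp
  qed
qed

lemma inverse_two_Erad_eq:
  "1 / (2 * Erad \<delta> \<alpha> x) = real x powr (1 + \<alpha>) * ln (real x + 1) powr \<alpha> / (2 * \<delta>)"
  unfolding Erad_def by simp

lemma one_le_inverse_two_Erad:
  assumes "0 < \<delta>" "\<delta> \<le> 1/4" "0 \<le> \<alpha>" "\<alpha> \<le> 1" "1 \<le> x"
  shows "1 \<le> 1 / (2 * Erad \<delta> \<alpha> x)"
proof -
  have "1 * (1/2) \<le> real x powr (1 + \<alpha>) * ln (real x + 1) powr \<alpha>"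
    using assms ln_Suc_powr_ge_half by (intro mult_mono ge_one_powr_ge_zero) auto
  then show ?thesis using assms unfolding inverse_two_Erad_eq by (simp add: field_simps)
qed

lemma lexp_eq_floor_log: "lexp \<delta> \<alpha> x = \<lfloor>log 2 (1 / (2 * Erad \<delta> \<alpha> x))\<rfloor>"
  unfolding lexp_def inverse_two_Erad_eq log_def ..

lemma lexp_nonneg:
  assumes "0 < \<delta>" "\<delta> \<le> 1/4" "0 \<le> \<alpha>" "\<alpha> \<le> 1" "1 \<le> x"
  shows "0 \<le> lexp \<delta> \<alpha> x"
  using one_le_inverse_two_Erad[OF assms] unfolding lexp_eq_floor_log by (simp add: log_def)

lemma lexp_powr_bounds:
  assumes "0 < \<delta>" "1 \<le> x"
  shows "2 powr lexp \<delta> \<alpha> x \<le> 1 / (2 * Erad \<delta> \<alpha> x)"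
    "1 / (2 * Erad \<delta> \<alpha> x) < 2 powr (lexp \<delta> \<alpha> x + 1)"
  using floor_log_eq_powr_iff[of "1 / (2 * Erad \<delta> \<alpha> x)" 2 "lexp \<delta> \<alpha> x"]
    Erad_pos[OF assms] unfolding lexp_eq_floor_log by auto

lemma inverse_two_Erad_le_qnext_arg:
  assumes d: "0 < \<delta>" "\<delta> \<le> 1 / 2^20" and a: "0 \<le> \<alpha>" "\<alpha> \<le> 1" and x: "1 \<le> x" "x \<le> q"
  shows "1 / (2 * Erad \<delta> \<alpha> x) \<le> (real q ^ 2 / \<delta>) * ln (real q ^ 2 / \<delta>)"
proof -
  define Z where "Z = real q ^ 2 / \<delta>"
  note qb = qnext_bounds[OF d order.trans[OF x], folded Z_def]
  have "real x powr (1 + \<alpha>) \<le> real x powr 2" using x a by (intro powr_mono) auto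
  also have "\<dots> \<le> real q ^ 2" using x by (simp add: powr_realpow power_mono)
  finally have p1: "real x powr (1 + \<alpha>) \<le> real q ^ 2" .
  have "real q * 1 \<le> real q * real q" "real x \<le> real q" "1 \<le> real x"
    using x by (auto intro: mult_left_mono)
  then have "real x + 1 \<le> 2 * real q ^ 2" unfolding power2_eq_square by linarith
  also have "\<dots> \<le> (1 / \<delta>) * real q ^ 2"
    using d by (intro mult_right_mono) (auto simp: field_simps)
  also have "\<dots> = Z" unfolding Z_def by simp
  finally have LZ: "ln (real x + 1) \<le> ln Z" by simp
  have p2: "ln (real x + 1) powr \<alpha> \<le> ln Z"
  proof (cases "1 \<le> ln (real x + 1)")
    case True
    then have "ln (real x + 1) powr \<alpha> \<le> ln (real x + 1) powr 1" using a by (intro powr_mono) auto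
    then show ?thesis using True LZ by simp
  next
    case False
    then have "ln (real x + 1) powr \<alpha> \<le> 1" using a by (intro powr_le1) auto
    then show ?thesis using qb(3) by linarith
  qed
  have "real x powr (1 + \<alpha>) * ln (real x + 1) powr \<alpha> \<le> real q ^ 2 * ln Z"
    using p1 p2 by (intro mult_mono) auto
  then have "1 / (2 * Erad \<delta> \<alpha> x) \<le> real q ^ 2 * ln Z / (2 * \<delta>)"
    unfolding inverse_two_Erad_eq using d by (intro divide_right_mono) auto
  also have "\<dots> = Z * ln Z / 2" unfolding Z_def by simp
  also have "\<dots> \<le> Z * ln Z"
  proof -
    have "0 \<le> Z" using qb(5) zero_le_power2[of "real q"] by linarith
    then have "0 \<le> Z * ln Z" using qb(3) by simp
    then show ?thesis by simp
  qed
  finally show ?thesis unfolding Z_def .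
qed

lemma common_lexp_bound:
  assumes d: "0 < \<delta>" "\<delta> \<le> 1 / 2^20" and A: "finite A" "A \<noteq> {}" "A \<subseteq> {0..1}" and q: "1 \<le> q"
  obtains m :: nat where "\<And>\<alpha> x. \<alpha> \<in> A \<Longrightarrow> x \<in> {1..q} \<Longrightarrow> lexp \<delta> \<alpha> x \<le> int m"
    "(2::real) ^ m < real (qnext \<delta> q)"
proof -
  define M where "M = (\<lambda>(\<alpha>, x). nat (lexp \<delta> \<alpha> x)) ` (A \<times> {1..q})"
  have M: "finite M" "M \<noteq> {}" unfolding M_def using A q by auto
  have "(2::real) ^ nat (lexp \<delta> \<alpha> x) < real (qnext \<delta> q)" if "\<alpha> \<in> A" "x \<in> {1..q}" for \<alpha> x
  proof -
    have "0 \<le> lexp \<delta> \<alpha> x" using lexp_nonneg[OF d(1)] d(2) A(3) that by auto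
    then have "(2::real) ^ nat (lexp \<delta> \<alpha> x) = 2 powr lexp \<delta> \<alpha> x"
      by (simp add: powr_realpow[symmetric])
    also have "\<dots> \<le> 1 / (2 * Erad \<delta> \<alpha> x)" using lexp_powr_bounds(1) d that by simp
    also have "\<dots> \<le> (real q ^ 2 / \<delta>) * ln (real q ^ 2 / \<delta>)"
      using inverse_two_Erad_le_qnext_arg[OF d] A(3) that by auto
    also have "\<dots> < real (qnext \<delta> q)" using qnext_bounds(1)[OF d q] by simp
    finally show ?thesis .
  qed
  then have "(2::real) ^ Max M < real (qnext \<delta> q)" using Max_in[OF M] unfolding M_def by auto
  moreover have "lexp \<delta> \<alpha> x \<le> int (Max M)" if "\<alpha> \<in> A" "x \<in> {1..q}" for \<alpha> x
    using Max_ge[OF M(1), of "nat (lexp \<delta> \<alpha> x)"] that unfolding M_def by force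
  ultimately show ?thesis using that by blast
qed

section \<open>Dyadic cells\<close>

lemma near_grid_of_not_Acomp:
  assumes "0 < \<delta>" "\<delta> \<le> 1/4" "0 \<le> \<alpha>" "\<alpha> \<le> 1" "1 \<le> x"
    and t: "t \<in> {0..1}" "t \<notin> Acomp \<delta> \<alpha> x"
  shows "\<exists>y\<in>{0..x}. \<bar>t - real y / real x\<bar> < 5 * Erad \<delta> \<alpha> x"
proof -
  define l where "l = lexp \<delta> \<alpha> x"
  define R where "R = Erad \<delta> \<alpha> x"
  define N :: nat where "N = 2 ^ nat l"
  have R0: "0 < R" using Erad_pos assms R_def by auto
  have PN: "2 powr real_of_int l = real N"
    using lexp_nonneg[OF assms(1-5)] unfolding N_def l_def by (simp add: powr_realpow[symmetric])
  have N1: "1 \<le> N" unfolding N_def by simp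
  have "1 / (2 * R) < 2 * real N"
    using lexp_powr_bounds(2)[OF assms(1,5), of \<alpha>] PN unfolding l_def R_def by (simp add: powr_add)
  then have NR: "1 / real N < 4 * R" using R0 N1 by (simp add: field_simps)
  text \<open>The level-\<open>l\<close> dyadic interval through \<open>t\<close> lies in \<open>[0, 1]\<close>, so as \<open>t \<notin> A\<^sup>c\<close> its
    interior meets \<open>E\<^sub>\<alpha>(x)\<close>.\<close>
  define a :: int where "a = (if t = 1 then int N - 1 else \<lfloor>t * real N\<rfloor>)"
  have "\<lfloor>t * real N\<rfloor> < int N" if "t \<noteq> 1"
    using t N1 that by (simp add: floor_less_iff)
  then have a: "real_of_int a \<le> t * real N" "t * real N \<le> real_of_int a + 1" "0 \<le> a" "a + 1 \<le> int N"
    using t N1 unfolding a_def by (auto simp: of_nat_diff)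
  have tin: "t \<in> dyad l a" and sub: "dyad l a \<subseteq> {0..1}"
    unfolding dyad_def PN using a N1 by (auto simp: field_simps)
  have "dyad_int l a \<inter> Eset \<delta> \<alpha> x \<noteq> {}"
    using t tin sub unfolding Acomp_def l_def by blast
  then obtain e y where e: "e \<in> dyad_int l a" and y: "y \<in> {0..x}" "e \<in> Eint \<delta> \<alpha> x y"
    unfolding Eset_def by blast
  have "\<bar>e - real y / real x\<bar> < R" using y(2) unfolding Eint_def R_def by auto
  moreover have "\<bar>t - e\<bar> \<le> 1 / real N"
    using e tin unfolding dyad_int_def dyad_def PN by (simp add: add_divide_distrib abs_le_iff)
  ultimately have "\<bar>t - real y / real x\<bar> < 5 * R" using NR by linarith
  then show ?thesis using y R_def by blast
qed

definition dcell :: "nat \<Rightarrow> nat \<Rightarrow> real set" where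
  "dcell m b = {real b / 2^m .. (real b + 1) / 2^m}"

text \<open>Up to the finitely many dyadic endpoints, \<open>S\<close> is a union of level-\<open>m\<close> cells.\<close>
definition dyadic_covered :: "nat \<Rightarrow> real set \<Rightarrow> bool" where
  "dyadic_covered m S \<longleftrightarrow>
     S \<subseteq> (\<Union>b\<in>{b. b < 2^m \<and> dcell m b \<subseteq> S}. dcell m b) \<union> (\<lambda>k. real k / 2^m) ` {..2^m}"

lemma dcell_subset_unit: "b < 2^m \<Longrightarrow> dcell m b \<subseteq> {0..1}"
proof -
  assume "b < 2^m"
  then have "real (b + 1) \<le> real ((2::nat)^m)" by (simp only: of_nat_le_iff)
  then have "real b + 1 \<le> 2^m" by simp
  then show ?thesis unfolding dcell_def by (auto simp: field_simps)
qed

lemma dcell_through_point: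
  assumes "t \<in> {0..1}" "t \<notin> (\<lambda>k. real k / 2^m) ` {..2^m}"
  obtains b where "b < 2^m" "real b < t * 2^m" "t * 2^m < real b + 1"
proof -
  define b :: nat where "b = nat \<lfloor>t * 2^m\<rfloor>"
  have le: "t * 2^m \<le> 1 * 2^m" using assms(1) by (intro mult_right_mono) auto
  have b: "real b = of_int \<lfloor>t * 2^m\<rfloor>" unfolding b_def using assms(1) by simp
  have "t * 2^m \<noteq> real b"
  proof
    assume tb: "t * 2^m = real b"
    then have "real b \<le> real ((2::nat)^m)" using le by simp
    then have "b \<le> 2^m" by (simp only: of_nat_le_iff)
    moreover have "t = real b / 2^m" using tb by (simp add: field_simps)
    ultimately show False using assms(2) by auto
  qed
  then have lo: "real b < t * 2^m" using b by (metis of_int_floor_le order_le_neq_trans)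
  moreover have "t * 2^m < real b + 1" using b by linarith
  moreover have "real b < real ((2::nat)^m)"
    using lo le by (simp only: of_nat_power of_nat_numeral)
  then have "b < 2^m" by (simp only: of_nat_less_iff)
  ultimately show ?thesis using that by blast
qed

lemma dcell_subset_dyad:
  fixes l :: int and m b :: nat
  assumes "0 \<le> l" "l \<le> int m" "t \<in> dyad l a"
    and "real b < t * 2^m" "t * 2^m < real b + 1"
  shows "dcell m b \<subseteq> dyad l a"
proof -
  define D :: nat where "D = 2 ^ nat l"
  define K :: nat where "K = 2 ^ (m - nat l)"
  have PD: "2 powr real_of_int l = real D"
    using assms(1) unfolding D_def by (simp add: powr_realpow[symmetric])
  have DK: "(2::real)^m = real D * real K"
    using assms(1,2) unfolding D_def K_def by (simp flip: power_add)
  have DK0: "real D > 0" "real K > 0" unfolding D_def K_def by auto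
  have t: "real_of_int a / real D \<le> t" "t \<le> (real_of_int a + 1) / real D"
    using assms(3) unfolding dyad_def PD by auto
  have lo: "real_of_int a * real K \<le> t * 2^m" using t(1) DK0 DK by (simp add: field_simps)
  have "t * real D * real K \<le> (real_of_int a + 1) * real K"
    using t(2) DK0 by (intro mult_right_mono) (auto simp: field_simps)
  then have hi: "t * 2^m \<le> (real_of_int a + 1) * real K" using DK by (simp add: mult.assoc)
  have "real_of_int (a * int K) < real_of_int (int b + 1)" using lo assms(5) by simp
  moreover have "real_of_int (int b) < real_of_int ((a + 1) * int K)" using hi assms(4) by simp
  ultimately have "a * int K \<le> int b" "int b + 1 \<le> (a + 1) * int K"
    unfolding of_int_less_iff by linarith+
  then have "real_of_int (a * int K) \<le> real_of_int (int b)"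
    "real_of_int (int b + 1) \<le> real_of_int ((a + 1) * int K)"
    by (simp_all only: of_int_le_iff)
  then have "real_of_int a * real K / 2^m \<le> real b / 2^m"
    "(real b + 1) / 2^m \<le> (real_of_int a + 1) * real K / 2^m"
    by (simp_all add: divide_right_mono)
  moreover have "real_of_int a / real D = real_of_int a * real K / 2^m"
    "(real_of_int a + 1) / real D = (real_of_int a + 1) * real K / 2^m"
    using DK DK0 by simp_all
  ultimately show ?thesis unfolding dcell_def dyad_def PD by auto
qed

lemma dcell_subset_INT_Acomp:
  fixes m b :: nat
  assumes "0 < \<delta>" "\<delta> \<le> 1/4" "0 \<le> \<alpha>" "\<alpha> \<le> 1"
    and K: "\<And>x. x \<in> K \<Longrightarrow> 1 \<le> x \<and> lexp \<delta> \<alpha> x \<le> int m"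
    and t: "t \<in> (\<Inter>x\<in>K. Acomp \<delta> \<alpha> x)" "real b < t * 2^m" "t * 2^m < real b + 1"
  shows "dcell m b \<subseteq> (\<Inter>x\<in>K. Acomp \<delta> \<alpha> x)"
proof (intro INT_greatest)
  fix x assume "x \<in> K"
  with t(1) obtain a where a: "t \<in> dyad (lexp \<delta> \<alpha> x) a" "dyad (lexp \<delta> \<alpha> x) a \<subseteq> {0..1}"
    "dyad_int (lexp \<delta> \<alpha> x) a \<inter> Eset \<delta> \<alpha> x = {}"
    unfolding Acomp_def by blast
  have "dcell m b \<subseteq> dyad (lexp \<delta> \<alpha> x) a"
    using dcell_subset_dyad[OF lexp_nonneg _ a(1) t(2,3)] assms K[OF \<open>x \<in> K\<close>] by auto
  moreover have "dyad (lexp \<delta> \<alpha> x) a \<subseteq> Acomp \<delta> \<alpha> x" unfolding Acomp_def using a by blast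
  ultimately show "dcell m b \<subseteq> Acomp \<delta> \<alpha> x" by blast
qed

lemma Bset_dyadic_covered:
  assumes "0 < \<delta>" "\<delta> \<le> 1/4" "\<alpha>1 \<in> {0..1}" "\<alpha>2 \<in> {0..1}"
    and m1: "\<And>x. x \<in> Kset \<delta> \<xi> \<beta>1 q \<Longrightarrow> lexp \<delta> \<alpha>1 x \<le> int m"
    and m2: "\<And>x. x \<in> Kset \<delta> \<xi> \<beta>2 q \<Longrightarrow> lexp \<delta> \<alpha>2 x \<le> int m"
  shows "dyadic_covered m (Bset \<delta> \<xi> \<alpha>1 \<beta>1 \<alpha>2 \<beta>2 q)"
  unfolding dyadic_covered_def
proof
  fix t assume t: "t \<in> Bset \<delta> \<xi> \<alpha>1 \<beta>1 \<alpha>2 \<beta>2 q"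
  then have t01: "t \<in> {0..1}" unfolding Bset_def by auto
  show "t \<in> (\<Union>b\<in>{b. b < 2^m \<and> dcell m b \<subseteq> Bset \<delta> \<xi> \<alpha>1 \<beta>1 \<alpha>2 \<beta>2 q}. dcell m b)
             \<union> (\<lambda>k. real k / 2^m) ` {..2^m}"
  proof (cases "t \<in> (\<lambda>k. real k / 2^m) ` {..2^m}")
    case False
    then obtain b where b: "b < 2^m" "real b < t * 2^m" "t * 2^m < real b + 1"
      using dcell_through_point[OF t01] by blast
    have "dcell m b \<subseteq> (\<Inter>x\<in>Kset \<delta> \<xi> \<beta>1 q. Acomp \<delta> \<alpha>1 x)"
      using t m1 assms(1-3) b(2,3)
      by (intro dcell_subset_INT_Acomp) (auto simp: Bset_def mem_Kset_iff)
    moreover have "dcell m b \<subseteq> (\<Inter>x\<in>Kset \<delta> \<xi> \<beta>2 q. Acomp \<delta> \<alpha>2 x)"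
      using t m2 assms(1,2,4) b(2,3)
      by (intro dcell_subset_INT_Acomp) (auto simp: Bset_def mem_Kset_iff)
    ultimately have "dcell m b \<subseteq> Bset \<delta> \<xi> \<alpha>1 \<beta>1 \<alpha>2 \<beta>2 q"
      using dcell_subset_unit[OF b(1)] unfolding Bset_def by blast
    moreover have "t \<in> dcell m b" using b unfolding dcell_def by (auto simp: field_simps)
    ultimately show ?thesis using b(1) by blast
  qed blast
qed

section \<open>Measure estimates\<close>

lemma lmeasurable_Ico: "{a..<b::real} \<in> lmeasurable"
  by (rule fmeasurableI2[OF lmeasurable_interval(1)[of a b]]) auto

lemma measure_lebesgue_Ico: "a \<le> b \<Longrightarrow> measure lebesgue {a..<b::real} = b - a"
  by (subst measure_completion) auto

lemma measure_lebesgue_Ioo: "a \<le> b \<Longrightarrow> measure lebesgue {a<..<b::real} = b - a"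
  by (subst measure_completion) auto

lemma card_le_open_interval_length:
  fixes Y :: "nat set"
  assumes "finite Y" "\<And>y. y \<in> Y \<Longrightarrow> u < real y \<and> real y < v" "u \<le> v"
  shows "real (card Y) \<le> v - u + 1"
proof (cases "Y = {}")
  case True then show ?thesis using assms by simp
next
  case False
  have "Min Y \<in> Y" "Max Y \<in> Y" using False assms(1) by auto
  then have b: "u < real (Min Y)" "real (Max Y) < v" "Min Y \<le> Max Y" using assms by auto
  have "card Y \<le> card {Min Y..Max Y}" using assms(1) by (intro card_mono) auto
  then have "real (card Y) \<le> real (Max Y) + 1 - real (Min Y)" using b(3) by (simp add: of_nat_diff)
  then show ?thesis using b by linarith
qed

lemma card_dcells_le_measure:
  fixes m :: nat
  assumes "S \<in> lmeasurable"
  shows "real (card {b. b < 2^m \<and> dcell m b \<subseteq> S}) / 2^m \<le> measure lebesgue S"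
proof -
  define G where "G = {b. b < (2::nat)^m \<and> dcell m b \<subseteq> S}"
  define hc where "hc b = {real b / 2^m ..< (real b + 1) / 2^m :: real}" for b :: nat
  have finG: "finite G" unfolding G_def by auto
  have disj: "disjnt (hc i) (hc j)" if "i \<noteq> j" for i j
  proof -
    have "(real i + 1) / 2^m \<le> real j / 2^m \<or> (real j + 1) / 2^m \<le> real i / 2^m"
      using that by (cases "i < j") (auto simp: divide_right_mono)
    then show ?thesis unfolding disjnt_def hc_def by auto
  qed
  have "real (card G) / 2^m = (\<Sum>b\<in>G. measure lebesgue (hc b))"
    by (simp add: hc_def measure_lebesgue_Ico divide_right_mono add_divide_distrib)
  also have "\<dots> = measure lebesgue (\<Union>b\<in>G. hc b)"
    using finG disj by (intro measure_UNION'[symmetric]) (auto simp: pairwise_def hc_def lmeasurable_Ico)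
  also have "\<dots> \<le> measure lebesgue S"
    using assms finG unfolding G_def hc_def dcell_def
    by (intro measure_mono_fmeasurable) (auto intro!: sets.finite_UN lmeasurable_Ico)
  finally show ?thesis unfolding G_def .
qed

lemma measure_Int_interval_le_dcells:
  fixes m :: nat and r c :: real and S :: "real set"
  defines "G \<equiv> {b. b < 2^m \<and> dcell m b \<subseteq> S}"
  assumes "S \<in> lmeasurable" "dyadic_covered m S" "0 < r"
  shows "measure lebesgue (S \<inter> {c - r <..< c + r})
           \<le> (\<Sum>b\<in>G. if dcell m b \<inter> {c - r <..< c + r} \<noteq> {} then 2 * r else 0)"
proof -
  define J where "J = {c - r <..< c + r}"
  define Pts where "Pts = (\<lambda>k. real k / 2^m) ` {..(2::nat)^m}"
  have finG: "finite G" unfolding G_def by auto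
  have mU: "(\<Union>b\<in>G. dcell m b \<inter> J) \<in> lmeasurable"
    using finG by (intro fmeasurable.finite_UN) (auto simp: dcell_def J_def)
  have mP: "Pts \<in> lmeasurable" "measure lebesgue Pts = 0"
    unfolding Pts_def by (auto intro: lmeasurable_compact finite_imp_compact
        simp: negligible_imp_measure0 negligible_finite)
  have "S \<inter> J \<subseteq> (\<Union>b\<in>G. dcell m b \<inter> J) \<union> Pts"
    using assms(3) unfolding dyadic_covered_def G_def Pts_def by blast
  then have "measure lebesgue (S \<inter> J) \<le> measure lebesgue ((\<Union>b\<in>G. dcell m b \<inter> J) \<union> Pts)"
    using assms(2) mU mP by (intro measure_mono_fmeasurable) (auto simp: J_def)
  also have "\<dots> \<le> measure lebesgue (\<Union>b\<in>G. dcell m b \<inter> J)"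
    using measure_Un_le[of "\<Union>b\<in>G. dcell m b \<inter> J" lebesgue Pts] mU mP by auto
  also have "\<dots> \<le> (\<Sum>b\<in>G. measure lebesgue (dcell m b \<inter> J))"
    using finG by (intro measure_UNION_le) (auto simp: dcell_def J_def)
  also have "\<dots> \<le> (\<Sum>b\<in>G. if dcell m b \<inter> J \<noteq> {} then 2 * r else 0)"
  proof (intro sum_mono)
    fix b
    have "measure lebesgue (dcell m b \<inter> J) \<le> measure lebesgue J"
      by (intro measure_mono_fmeasurable) (auto simp: J_def dcell_def)
    also have "\<dots> = 2 * r" unfolding J_def using assms(4) by (subst measure_lebesgue_Ioo) auto
    finally show "measure lebesgue (dcell m b \<inter> J) \<le> (if dcell m b \<inter> J \<noteq> {} then 2 * r else 0)"
      by simp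
  qed
  finally show ?thesis unfolding J_def .
qed

lemma card_grid_near_dcell_le:
  fixes m x b :: nat and r :: real
  assumes "0 < r" "1 \<le> x"
  shows "real (card {y\<in>{0..x}. dcell m b \<inter> {real y / real x - r <..< real y / real x + r} \<noteq> {}})
           \<le> real x * (1 / 2^m + 2 * r) + 1"
proof -
  define u where "u = real x * (real b / 2^m - r)"
  define v where "v = real x * ((real b + 1) / 2^m + r)"
  have "real (card {y\<in>{0..x}. dcell m b \<inter> {real y / real x - r <..< real y / real x + r} \<noteq> {}})
          \<le> v - u + 1"
  proof (rule card_le_open_interval_length)
    show "u \<le> v" unfolding u_def v_def using assms
      by (intro mult_left_mono) (auto simp: add_divide_distrib)
    fix y assume "y \<in> {y\<in>{0..x}. dcell m b \<inter> {real y / real x - r <..< real y / real x + r} \<noteq> {}}"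
    then have "real b / 2^m - r < real y / real x" "real y / real x < (real b + 1) / 2^m + r"
      unfolding dcell_def by auto
    then show "u < real y \<and> real y < v" unfolding u_def v_def using assms
      by (auto simp: field_simps)
  qed simp
  also have "v - u + 1 = real x * (1 / 2^m + 2 * r) + 1" unfolding u_def v_def
    by (simp add: field_simps)
  finally show ?thesis .
qed

text \<open>Double counting over pairs (cell, grid point): each cell of \<open>S\<close> meets at most
  \<open>x (2\<^sup>-\<^sup>m + 2r) + 1\<close> of the intervals, each contributing at most \<open>2r\<close>, and there are at most
  \<open>2\<^sup>m \<mu>(S)\<close> cells.\<close>
lemma sum_measure_near_grid_le:
  fixes m x :: nat and r :: real
  assumes "S \<in> lmeasurable" "dyadic_covered m S" "0 < r" "1 \<le> x"
  shows "(\<Sum>y\<in>{0..x}. measure lebesgue (S \<inter> {real y / real x - r <..< real y / real x + r}))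
           \<le> measure lebesgue S * 2^m * (2 * r) * (real x * (1 / 2^m + 2 * r) + 1)"
proof -
  define G where "G = {b. b < (2::nat)^m \<and> dcell m b \<subseteq> S}"
  define J where "J y = {real y / real x - r <..< real y / real x + r}" for y :: nat
  define C where "C = real x * (1 / 2^m + 2 * r) + 1"
  have "(\<Sum>y\<in>{0..x}. measure lebesgue (S \<inter> J y))
        \<le> (\<Sum>y\<in>{0..x}. \<Sum>b\<in>G. if dcell m b \<inter> J y \<noteq> {} then 2 * r else 0)"
    unfolding G_def J_def using assms by (intro sum_mono measure_Int_interval_le_dcells)
  also have "\<dots> = (\<Sum>b\<in>G. 2 * r * real (card {y\<in>{0..x}. dcell m b \<inter> J y \<noteq> {}}))"
    by (subst sum.swap) (simp add: sum.If_cases Int_def atLeast0AtMost mult.commute)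
  also have "\<dots> \<le> (\<Sum>b\<in>G. 2 * r * C)"
    unfolding C_def J_def using assms by (intro sum_mono mult_left_mono card_grid_near_dcell_le) auto
  also have "\<dots> = real (card G) / 2^m * (2^m * (2 * r) * C)" by simp
  also have "\<dots> \<le> measure lebesgue S * (2^m * (2 * r) * C)"
    unfolding G_def using card_dcells_le_measure[OF assms(1)] assms(3,4)
    by (intro mult_right_mono) (auto simp: C_def)
  finally show ?thesis unfolding J_def C_def by (simp add: mult.assoc)
qed

lemma finite_dyad_subset_unit: "finite {a. dyad l a \<subseteq> {0..1}}"
proof -
  define P where "P = 2 powr real_of_int l"
  have P0: "0 < P" unfolding P_def by simp
  have "{a. dyad l a \<subseteq> {0..1}} \<subseteq> {0..\<lceil>P\<rceil>}"
  proof
    fix a assume "a \<in> {a. dyad l a \<subseteq> {0..1}}"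
    moreover have "real_of_int a / P \<le> (real_of_int a + 1) / P"
      using P0 by (simp add: divide_right_mono)
    ultimately have "0 \<le> real_of_int a / P" "(real_of_int a + 1) / P \<le> 1"
      unfolding dyad_def P_def[symmetric] by auto
    then show "a \<in> {0..\<lceil>P\<rceil>}" using P0 by (simp add: zero_le_divide_iff divide_le_eq) linarith
  qed
  then show ?thesis by (rule finite_subset) simp
qed

lemma closed_Acomp: "closed (Acomp \<delta> \<alpha> x)"
proof -
  have "Acomp \<delta> \<alpha> x = \<Union> (dyad (lexp \<delta> \<alpha> x) ` {a. dyad (lexp \<delta> \<alpha> x) a \<subseteq> {0..1} \<and>
           dyad_int (lexp \<delta> \<alpha> x) a \<inter> Eset \<delta> \<alpha> x = {}})"
    unfolding Acomp_def by blast
  also have "closed \<dots>"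
    by (intro closed_Union finite_imageI finite_subset[OF _ finite_dyad_subset_unit[of "lexp \<delta> \<alpha> x"]])
       (auto simp: dyad_def)
  finally show ?thesis .
qed

lemma compact_Bset: "compact (Bset \<delta> \<xi> \<alpha>1 \<beta>1 \<alpha>2 \<beta>2 q)"
proof -
  have "closed (Bset \<delta> \<xi> \<alpha>1 \<beta>1 \<alpha>2 \<beta>2 q)" unfolding Bset_def
    by (intro closed_Int closed_INT) (auto simp: closed_Acomp)
  moreover have "bounded (Bset \<delta> \<xi> \<alpha>1 \<beta>1 \<alpha>2 \<beta>2 q)" unfolding Bset_def
    by (rule bounded_subset[of "{0..1}"]) auto
  ultimately show ?thesis by (simp add: compact_eq_bounded_closed)
qed

lemma Bset_antimono: "Q \<le> Q' \<Longrightarrow> Bset \<delta> \<xi> \<alpha>1 \<beta>1 \<alpha>2 \<beta>2 Q' \<subseteq> Bset \<delta> \<xi> \<alpha>1 \<beta>1 \<alpha>2 \<beta>2 Q"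
  unfolding Bset_def using Kset_mono[of Q Q'] by blast

lemma of_nat_mult_Erad: "1 \<le> x \<Longrightarrow> real x * Erad \<delta> \<alpha> x = \<delta> / xlog x powr \<alpha>"
  unfolding Erad_def xlog_def by (simp add: powr_add powr_mult field_simps)

lemma weight_le_delta:
  assumes "0 < \<delta>" "0 \<le> \<alpha>" "2 \<le> x"
  shows "\<delta> / xlog x powr \<alpha> \<le> \<delta>"
proof -
  have "ln (3::real) \<le> ln (real x + 1)" using assms by simp
  moreover have "1 \<le> ln (3::real)" using ln_ge_iff[of 3 1] exp_le by simp
  ultimately have "1 \<le> ln (real x + 1)" by linarith
  then have "1 * 1 \<le> xlog x" unfolding xlog_def using assms by (intro mult_mono) auto
  then have "1 \<le> xlog x powr \<alpha>" using assms by (intro ge_one_powr_ge_zero) auto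
  then show ?thesis using assms by (simp add: divide_le_eq)
qed

text \<open>Every point of \<open>S\<close> outside \<open>A\<^sup>c\<^sub>\<alpha>(x)\<close> lies within \<open>r = 5 Erad\<close> of a grid point
  \<open>y / x\<close>. With \<open>x r = 5 w\<close>, \<open>w \<le> \<delta>\<close> the weight and \<open>2\<^sup>m \<le> x\<close>, the double counting bound is at
  most \<open>(20 w + 100 w\<^sup>2) \<mu>(S) \<le> 25 w \<mu>(S)\<close>.\<close>
lemma measure_diff_Acomp_le:
  fixes S :: "real set" and m x :: nat
  assumes d: "0 < \<delta>" "\<delta> \<le> 1/100" and a: "0 \<le> \<alpha>" "\<alpha> \<le> 1" and x: "2 \<le> x" "2^m \<le> x"
    and S: "S \<in> lmeasurable" "S \<subseteq> {0..1}" "dyadic_covered m S"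
  shows "measure lebesgue (S - Acomp \<delta> \<alpha> x) \<le> 25 * (\<delta> / xlog x powr \<alpha>) * measure lebesgue S"
proof -
  define r where "r = 5 * Erad \<delta> \<alpha> x"
  define w where "w = \<delta> / xlog x powr \<alpha>"
  define J where "J y = {real y / real x - r <..< real y / real x + r}" for y :: nat
  have x1: "1 \<le> x" using x by simp
  have r0: "0 < r" using Erad_pos d x1 r_def by auto
  have "r * real x = 5 * (real x * Erad \<delta> \<alpha> x)" unfolding r_def by simp
  then have rx: "r * real x = 5 * w" using of_nat_mult_Erad[OF x1] unfolding w_def by simp
  have w: "0 \<le> w" "w \<le> \<delta>" using d(1) weight_le_delta[OF d(1) a(1) x(1)] unfolding w_def by auto
  have "S - Acomp \<delta> \<alpha> x \<subseteq> (\<Union>y\<in>{0..x}. S \<inter> J y)"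
  proof
    fix t assume t: "t \<in> S - Acomp \<delta> \<alpha> x"
    then have "t \<in> {0..1}" using S(2) by auto
    then obtain y where "y \<in> {0..x}" "\<bar>t - real y / real x\<bar> < r"
      using near_grid_of_not_Acomp[of \<delta> \<alpha> x t] d a x1 t unfolding r_def by auto
    then have "y \<in> {0..x}" "t \<in> S \<inter> J y" using t unfolding J_def by (auto simp: abs_less_iff)
    then show "t \<in> (\<Union>y\<in>{0..x}. S \<inter> J y)" by blast
  qed
  then have "measure lebesgue (S - Acomp \<delta> \<alpha> x) \<le> measure lebesgue (\<Union>y\<in>{0..x}. S \<inter> J y)"
    using S(1) closed_Acomp[of \<delta> \<alpha> x]
    by (intro measure_mono_fmeasurable) (auto intro!: fmeasurable.finite_UN sets.Diff borel_closed simp: J_def)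
  also have "\<dots> \<le> (\<Sum>y\<in>{0..x}. measure lebesgue (S \<inter> J y))"
    using S(1) by (intro measure_UNION_le) (auto simp: J_def)
  also have "\<dots> \<le> measure lebesgue S * (2^m * (2 * r) * (real x * (1 / 2^m + 2 * r) + 1))"
    unfolding J_def using sum_measure_near_grid_le[OF S(1,3) r0 x1] by (simp add: mult.assoc)
  also have "\<dots> \<le> measure lebesgue S * (25 * w)"
  proof (rule mult_left_mono)
    have xm: "(2::real)^m \<le> real x" using x(2) by (metis of_nat_le_iff of_nat_numeral of_nat_power)
    have "(2::real)^m * (2 * r) * (real x * (1 / 2^m + 2 * r) + 1)
           = 2 * (r * real x) + 4 * r * r * real x * 2^m + 2 * r * 2^m"
      by (simp add: field_simps)
    also have "\<dots> \<le> 2 * (r * real x) + 4 * (r * real x) * (r * real x) + 2 * (r * real x)"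
    proof -
      have "4 * r * r * real x * 2^m \<le> 4 * r * r * real x * real x"
        using xm r0 by (intro mult_left_mono) auto
      moreover have "2 * r * 2^m \<le> 2 * (r * real x)" using xm r0 by simp
      moreover have "4 * (r * real x) * (r * real x) = 4 * r * r * real x * real x"
        by (simp add: algebra_simps)
      ultimately show ?thesis by linarith
    qed
    also have "\<dots> = 20 * w + 100 * w * w" using rx by simp
    also have "\<dots> \<le> 25 * w" using w d by (simp add: mult_right_mono)
    finally show "(2::real)^m * (2 * r) * (real x * (1 / 2^m + 2 * r) + 1) \<le> 25 * w" .
  qed simp
  finally show ?thesis unfolding w_def by (simp add: algebra_simps)
qed

lemma measure_UN_diff_Acomp_le:
  fixes S :: "real set" and m :: nat and K :: "nat set"
  assumes "0 < \<delta>" "\<delta> \<le> 1/100" "0 \<le> \<alpha>" "\<alpha> \<le> 1"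
    and K: "finite K" "\<And>x. x \<in> K \<Longrightarrow> 2 \<le> x \<and> 2^m \<le> x"
    and S: "S \<in> lmeasurable" "S \<subseteq> {0..1}" "dyadic_covered m S"
  shows "measure lebesgue (\<Union>x\<in>K. S - Acomp \<delta> \<alpha> x)
           \<le> 25 * (\<Sum>x\<in>K. \<delta> / xlog x powr \<alpha>) * measure lebesgue S"
proof -
  have "measure lebesgue (\<Union>x\<in>K. S - Acomp \<delta> \<alpha> x) \<le> (\<Sum>x\<in>K. measure lebesgue (S - Acomp \<delta> \<alpha> x))"
    using K(1) S(1) closed_Acomp by (intro measure_UNION_le) (auto intro!: sets.Diff borel_closed)
  also have "\<dots> \<le> (\<Sum>x\<in>K. 25 * (\<delta> / xlog x powr \<alpha>) * measure lebesgue S)"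
    using assms by (intro sum_mono measure_diff_Acomp_le) auto
  also have "\<dots> = 25 * (\<Sum>x\<in>K. \<delta> / xlog x powr \<alpha>) * measure lebesgue S"
    by (simp add: sum_distrib_left sum_distrib_right mult.assoc)
  finally show ?thesis .
qed

lemma Bset_diff_subset:
  assumes "q \<le> q1"
  shows "Bset \<delta> \<xi> \<alpha>1 \<beta>1 \<alpha>2 \<beta>2 q1 - Bset \<delta> \<xi> \<alpha>1 \<beta>1 \<alpha>2 \<beta>2 q2 \<subseteq>
           (\<Union>x\<in>Kset \<delta> \<xi> \<beta>1 q2 - Kset \<delta> \<xi> \<beta>1 q1. Bset \<delta> \<xi> \<alpha>1 \<beta>1 \<alpha>2 \<beta>2 q - Acomp \<delta> \<alpha>1 x)
         \<union> (\<Union>x\<in>Kset \<delta> \<xi> \<beta>2 q2 - Kset \<delta> \<xi> \<beta>2 q1. Bset \<delta> \<xi> \<alpha>1 \<beta>1 \<alpha>2 \<beta>2 q - Acomp \<delta> \<alpha>2 x)"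
  using Bset_antimono[OF assms, of \<delta> \<xi> \<alpha>1 \<beta>1 \<alpha>2 \<beta>2] unfolding Bset_def by blast

lemma measure_new_Kset_loss_le:
  fixes S :: "real set" and m :: nat
  assumes d: "0 < \<delta>" "\<delta> \<le> 1 / 2^20" and bad: "badly_approximable \<delta> \<xi>"
    and a: "\<alpha> \<in> {0..1}" "\<beta> \<in> {0..1}" "\<alpha> + \<beta> = 1"
    and q: "1 \<le> q" "q1 = qnext \<delta> q" "q2 = qnext \<delta> q1"
    and S: "S \<in> lmeasurable" "S \<subseteq> {0..1}" "dyadic_covered m S" and m: "(2::real) ^ m < real q1"
  shows "measure lebesgue (\<Union>x\<in>Kset \<delta> \<xi> \<beta> q2 - Kset \<delta> \<xi> \<beta> q1. S - Acomp \<delta> \<alpha> x)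
           \<le> 2400 * \<delta> * measure lebesgue S"
proof -
  note qc = qnext_chain[OF d q]
  define W where "W = (\<Sum>x\<in>Kset \<delta> \<xi> \<beta> q2 - Kset \<delta> \<xi> \<beta> q1. \<delta> / xlog x powr \<alpha>)"
  have "2^m \<le> x" if "q1 < x" for x
    using m that by (metis le_less_trans less_imp_le of_nat_less_iff of_nat_numeral of_nat_power)
  then have "measure lebesgue (\<Union>x\<in>Kset \<delta> \<xi> \<beta> q2 - Kset \<delta> \<xi> \<beta> q1. S - Acomp \<delta> \<alpha> x)
               \<le> 25 * W * measure lebesgue S"
    unfolding W_def using d a qc(3) finite_Kset S
    by (intro measure_UN_diff_Acomp_le) (auto simp: mem_Kset_iff)
  also have "\<dots> \<le> 25 * (16 * \<delta> * 6) * measure lebesgue S"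
  proof (intro mult_right_mono mult_left_mono)
    have "W \<le> 16 * \<delta> * (ln (ln (real (Suc (2 * q2)))) - ln (ln (real (Suc q1))))"
      unfolding W_def using sum_weight_Kset_diff_le[OF bad d(1), of \<alpha> \<beta> q1 q2] qc a by auto
    also have "\<dots> \<le> 16 * \<delta> * 6" using qc(4) d by (intro mult_left_mono) auto
    finally show "W \<le> 16 * \<delta> * 6" .
  qed auto
  finally show ?thesis by simp
qed

lemma measure_Bset_diff_le:
  fixes \<delta> \<xi> \<alpha>1 \<alpha>2 \<beta>1 \<beta>2 :: real and q q1 q2 :: nat
  assumes d: "0 < \<delta>" "\<delta> \<le> 1 / 2^20" and bad: "badly_approximable \<delta> \<xi>"
    and a: "\<alpha>1 \<in> {0..1}" "\<alpha>2 \<in> {0..1}" "\<beta>1 \<in> {0..1}" "\<beta>2 \<in> {0..1}"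
    "\<alpha>1 + \<beta>1 = 1" "\<alpha>2 + \<beta>2 = 1"
    and q: "1 \<le> q" "q1 = qnext \<delta> q" "q2 = qnext \<delta> q1"
  defines "B \<equiv> Bset \<delta> \<xi> \<alpha>1 \<beta>1 \<alpha>2 \<beta>2"
  shows "measure lebesgue (B q1 - B q2) \<le> 4800 * \<delta> * measure lebesgue (B q)"
proof -
  obtain m where m: "\<And>\<alpha> x. \<alpha> \<in> {\<alpha>1, \<alpha>2} \<Longrightarrow> x \<in> {1..q} \<Longrightarrow> lexp \<delta> \<alpha> x \<le> int m"
    "(2::real) ^ m < real q1"
    using common_lexp_bound[OF d, of "{\<alpha>1, \<alpha>2}" q] a q by auto
  have "B q \<in> lmeasurable" unfolding B_def by (intro lmeasurable_compact compact_Bset)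
  moreover have "B q \<subseteq> {0..1}" unfolding B_def Bset_def by auto
  moreover have "dyadic_covered m (B q)"
    unfolding B_def using d a m(1) by (intro Bset_dyadic_covered) (auto simp: mem_Kset_iff)
  ultimately have Bq: "B q \<in> lmeasurable" "B q \<subseteq> {0..1}" "dyadic_covered m (B q)" by blast+
  define U where "U \<alpha> \<beta> = (\<Union>x\<in>Kset \<delta> \<xi> \<beta> q2 - Kset \<delta> \<xi> \<beta> q1. B q - Acomp \<delta> \<alpha> x)" for \<alpha> \<beta>
  have U: "U \<alpha> \<beta> \<in> sets lebesgue" "U \<alpha> \<beta> \<subseteq> B q" for \<alpha> \<beta>
    unfolding U_def
    by (intro sets.finite_UN finite_Diff finite_Kset sets.Diff fmeasurableD[OF Bq(1)] ballI
        sets_completionI_sets[of _ lborel, unfolded sets_lborel] borel_closed closed_Acomp) auto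
  have loss: "measure lebesgue (U \<alpha> \<beta>) \<le> 2400 * \<delta> * measure lebesgue (B q)"
    if "\<alpha> \<in> {0..1}" "\<beta> \<in> {0..1}" "\<alpha> + \<beta> = 1" for \<alpha> \<beta>
    unfolding U_def using measure_new_Kset_loss_le[OF d bad that q Bq m(2)] .
  have "B q1 - B q2 \<subseteq> U \<alpha>1 \<beta>1 \<union> U \<alpha>2 \<beta>2"
    using Bset_diff_subset[OF qnext_chain(1)[OF d q]] unfolding U_def B_def .
  moreover have "B q1 \<in> sets lebesgue" "B q2 \<in> sets lebesgue"
    unfolding B_def by (intro fmeasurableD lmeasurable_compact compact_Bset)+
  ultimately have "measure lebesgue (B q1 - B q2) \<le> measure lebesgue (U \<alpha>1 \<beta>1 \<union> U \<alpha>2 \<beta>2)"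
    using U by (intro measure_mono_fmeasurable fmeasurableI2[OF Bq(1)]) auto
  also have "\<dots> \<le> measure lebesgue (U \<alpha>1 \<beta>1) + measure lebesgue (U \<alpha>2 \<beta>2)"
    using U by (intro measure_Un_le) auto
  also have "\<dots> \<le> 2400 * \<delta> * measure lebesgue (B q) + 2400 * \<delta> * measure lebesgue (B q)"
    using loss a by (intro add_mono) auto
  finally show ?thesis by simp
qed

theorem lemma5:
  fixes \<delta> \<xi> \<alpha>1 \<alpha>2 \<beta>1 \<beta>2 :: real and q q1 q2 :: nat
  assumes "0 < \<delta>" and "\<delta> \<le> 2 powr (-20)"
    and "(INF n\<in>{n::nat. 1 \<le> n}. real n * dnint (real n * \<xi>)) \<ge> \<delta>"
    and "\<alpha>1 \<in> {0..1}" and "\<alpha>2 \<in> {0..1}" and "\<beta>1 \<in> {0..1}" and "\<beta>2 \<in> {0..1}"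
    and "\<alpha>1 + \<beta>1 = 1" and "\<alpha>2 + \<beta>2 = 1" and "\<alpha>1 = max \<alpha>1 \<alpha>2"
    and "1 \<le> q"
    and "q1 = qnext \<delta> q" and "q2 = qnext \<delta> q1"
    and "measure lebesgue (Bset \<delta> \<xi> \<alpha>1 \<beta>1 \<alpha>2 \<beta>2 q1)
           \<ge> measure lebesgue (Bset \<delta> \<xi> \<alpha>1 \<beta>1 \<alpha>2 \<beta>2 q) / 2"
    and "measure lebesgue (Bset \<delta> \<xi> \<alpha>1 \<beta>1 \<alpha>2 \<beta>2 q) / 2 > 0"
  shows "measure lebesgue (Bset \<delta> \<xi> \<alpha>1 \<beta>1 \<alpha>2 \<beta>2 q2)
           \<ge> measure lebesgue (Bset \<delta> \<xi> \<alpha>1 \<beta>1 \<alpha>2 \<beta>2 q1) / 2"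
proof -
  define B where "B = Bset \<delta> \<xi> \<alpha>1 \<beta>1 \<alpha>2 \<beta>2"
  have "(2::real) powr (-20) = inverse (2 powr 20)" by (rule powr_minus)
  also have "\<dots> = 1 / 2^20" by (simp add: powr_numeral inverse_eq_divide)
  finally have d: "\<delta> \<le> 1 / 2^20" using assms(2) by simp
  have loss: "measure lebesgue (B q1 - B q2) \<le> 4800 * \<delta> * measure lebesgue (B q)"
    using measure_Bset_diff_le[OF assms(1) d badly_approximableI_INF[OF assms(3)] assms(4-9,11-13)]
    unfolding B_def .
  have B: "B q1 \<in> lmeasurable" "B q2 \<in> lmeasurable"
    unfolding B_def by (intro lmeasurable_compact compact_Bset)+
  have "measure lebesgue (B q1) \<le> measure lebesgue (B q2 \<union> (B q1 - B q2))"
    using B by (intro measure_mono_fmeasurable) auto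
  also have "\<dots> \<le> measure lebesgue (B q2) + measure lebesgue (B q1 - B q2)"
    using B by (intro measure_Un_le) auto
  finally have "measure lebesgue (B q1) \<le> measure lebesgue (B q2) + measure lebesgue (B q1 - B q2)" .
  moreover have "4800 * \<delta> * measure lebesgue (B q) \<le> (1/4) * measure lebesgue (B q)"
    using d by (intro mult_right_mono) auto
  ultimately show ?thesis using loss assms(14) unfolding B_def by linarith
qed

end
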